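(* Let $F$ be $(\ell,\omega)$-relatively smooth on $\mathcal X\cap\mathcal S$. Then for any $\rho\ge2\ell$ and $x\in\mathcal X\cap\mathcal S$ we have $\Phi_{1/\rho}(x)\ge\Phi(x^+)$, where $x^+:=\arg\min_{y\in\mathcal X}\langle\nabla F(x),y\rangle+r(y)+(\rho-\ell)D_\omega(y,x)$.
   Context: Let $\mathcal X\subseteq\mathbb R^d$ be closed and convex, $\|\cdot\|$ a norm on $\mathbb R^d$. The problem is $\min_{x\in\mathcal X}\Phi(x):=F(x)+r(x)$, with $F$ differentiable and $r:\mathbb R^d\to\mathbb R$ convex, proper, lower semicontinuous. A DGF is $\omega:\mathrm{cl}(\mathcal S)\to\mathbb R$, $\mathcal S$ open with $\mathrm{ri}(\mathcal X)\subseteq\mathcal S$, $\omega$ continuously differentiable on $\mathcal S$ and $1$-strongly convex w.r.t. $\|\cdot\|$ on $\mathrm{cl}(\mathcal S)$; $D_\omega(x,y)=\omega(x)-\omega(y)-\langle\nabla\omega(y),x-y\rangle$. Bregman Moreau envelope: $\Phi_{1/\rho}(x):=\min_{y\in\mathcal X}[\Phi(y)+\rho D_\omega(y,x)]$ (minimizers assumed to exist). $F$ is $(\ell,\omega)$-relatively smooth on $\mathcal X\cap\mathcal S$ if for all $x,y\in\mathcal X\cap\mathcal S$: $-\ell D_\omega(x,y)\le F(x)-F(y)-\langle\nabla F(y),x-y\rangle\le\ell D_\omega(x,y)$. *)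

theory Defs
  imports "HOL-Analysis.Analysis"
begin

definition is_norm :: "('a::euclidean_space \<Rightarrow> real) \<Rightarrow> bool" where
  "is_norm N \<longleftrightarrow> (\<forall>x. 0 \<le> N x) \<and> (\<forall>x. N x = 0 \<longleftrightarrow> x = 0)
     \<and> (\<forall>c x. N (c *\<^sub>R x) = \<bar>c\<bar> * N x) \<and> (\<forall>x y. N (x + y) \<le> N x + N y)"

definition lsc :: "('a::topological_space \<Rightarrow> real) \<Rightarrow> bool" where
  "lsc f \<longleftrightarrow> (\<forall>c. closed {x. f x \<le> c})"

definition strongly_convex_on :: "'a::euclidean_space set \<Rightarrow> ('a \<Rightarrow> real) \<Rightarrow> ('a \<Rightarrow> real) \<Rightarrow> bool" where
  "strongly_convex_on C N w \<longleftrightarrow> convex C \<and>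
     (\<forall>x\<in>C. \<forall>y\<in>C. \<forall>t::real. 0 \<le> t \<and> t \<le> 1 \<longrightarrow>
        w (t *\<^sub>R x + (1 - t) *\<^sub>R y) \<le> t * w x + (1 - t) * w y - t * (1 - t) / 2 * (N (x - y))\<^sup>2)"

definition is_DGF :: "'a::euclidean_space set \<Rightarrow> ('a \<Rightarrow> real) \<Rightarrow> 'a set \<Rightarrow> ('a \<Rightarrow> real) \<Rightarrow> ('a \<Rightarrow> 'a) \<Rightarrow> bool" where
  "is_DGF X N S w gw \<longleftrightarrow> open S \<and> rel_interior X \<subseteq> S
     \<and> (\<forall>y\<in>S. (w has_derivative (\<lambda>h. gw y \<bullet> h)) (at y)) \<and> continuous_on S gw
     \<and> strongly_convex_on (closure S) N w"

definition bregman :: "('a::euclidean_space \<Rightarrow> real) \<Rightarrow> ('a \<Rightarrow> 'a) \<Rightarrow> 'a \<Rightarrow> 'a \<Rightarrow> real" where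
  "bregman w gw x y = w x - w y - gw y \<bullet> (x - y)"

text \<open>Bregman Moreau envelope \<Phi>_{1/\<rho>}(x) = min_{y\<in>X} [\<Phi> y + \<rho> D(y,x)].\<close>
definition moreau_env :: "'a::euclidean_space set \<Rightarrow> ('a \<Rightarrow> real) \<Rightarrow> ('a \<Rightarrow> real) \<Rightarrow> ('a \<Rightarrow> 'a) \<Rightarrow> real \<Rightarrow> 'a \<Rightarrow> real" where
  "moreau_env X Phi w gw \<rho> x = (INF y\<in>X. Phi y + \<rho> * bregman w gw y x)"

definition rel_smooth :: "'a::euclidean_space set \<Rightarrow> ('a \<Rightarrow> real) \<Rightarrow> ('a \<Rightarrow> 'a) \<Rightarrow> real \<Rightarrow> ('a \<Rightarrow> real) \<Rightarrow> ('a \<Rightarrow> 'a) \<Rightarrow> bool" where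
  "rel_smooth C F gF l w gw \<longleftrightarrow> (\<forall>x\<in>C. \<forall>y\<in>C.
     - l * bregman w gw x y \<le> F x - F y - gF y \<bullet> (x - y) \<and>
     F x - F y - gF y \<bullet> (x - y) \<le> l * bregman w gw x y)"

end

theory Submission
  imports Defs
begin

text \<open>Write \<open>h y = F y - F x - \<langle>\<nabla>F x, y - x\<rangle>\<close> and \<open>D y = D\<^sub>\<omega>(y, x)\<close>. Relative smoothness
  bounds \<open>F z \<ge> F x + \<langle>\<nabla>F x, z - x\<rangle> - \<ell> D z\<close> and \<open>F x\<^sup>+ \<le> F x + \<langle>\<nabla>F x, x\<^sup>+ - x\<rangle> + \<ell> D x\<^sup>+\<close>;
  combined with the optimality of \<open>x\<^sup>+\<close> this gives
  \<open>\<Phi> x\<^sup>+ + (\<rho> - 2\<ell>) D x\<^sup>+ \<le> \<Phi> z + \<rho> D z\<close> for every \<open>z \<in> X\<close>, and \<open>D \<ge> 0\<close> by strong convexity.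
  The one subtlety is that relative smoothness is only assumed on \<open>X \<inter> S\<close>, which contains
  \<open>ri X\<close> but possibly not \<open>X\<close>. Since \<open>D\<close> is convex and \<open>h\<close> continuous, the bound
  \<open>|h| \<le> \<ell> D\<close> passes to the limit along segments ending at a relative interior point;
  for \<open>\<ell> < 0\<close> it instead forces \<open>X = {x}\<close>.\<close>

lemma strongly_convex_on_imp_convex_on:
  assumes "strongly_convex_on C N w"
  shows "convex_on C w"
proof (rule convex_onI)
  show "convex C" using assms unfolding strongly_convex_on_def by blast
next
  fix t :: real and x y assume t: "0 < t" "t < 1" and xy: "x \<in> C" "y \<in> C"
  have "\<And>s. 0 \<le> s \<Longrightarrow> s \<le> 1 \<Longrightarrow>
      w (s *\<^sub>R x + (1 - s) *\<^sub>R y) \<le> s * w x + (1 - s) * w y - s * (1 - s) / 2 * (N (x - y))\<^sup>2"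
    using assms xy unfolding strongly_convex_on_def by blast
  from this[of "1 - t"] t have "w ((1 - t) *\<^sub>R x + t *\<^sub>R y)
      \<le> (1 - t) * w x + t * w y - (1 - t) * t / 2 * (N (x - y))\<^sup>2"
    by simp
  moreover have "0 \<le> (1 - t) * t / 2 * (N (x - y))\<^sup>2" using t by simp
  ultimately show "w ((1 - t) *\<^sub>R x + t *\<^sub>R y) \<le> (1 - t) * w x + t * w y" by simp
qed

lemma convex_on_bregman:
  assumes "convex_on C w"
  shows "convex_on C (\<lambda>y. bregman w gw y x)"
proof (rule convex_onI)
  show "convex C" using assms by (rule convex_on_imp_convex)
next
  fix t :: real and y z assume t: "0 < t" "t < 1" and yz: "y \<in> C" "z \<in> C"
  have "w ((1 - t) *\<^sub>R y + t *\<^sub>R z) \<le> (1 - t) * w y + t * w z"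
    using convex_onD[OF assms] t yz by simp
  then show "bregman w gw ((1 - t) *\<^sub>R y + t *\<^sub>R z) x
      \<le> (1 - t) * bregman w gw y x + t * bregman w gw z x"
    unfolding bregman_def by (simp add: inner_diff_right inner_add_right algebra_simps)
qed

lemma bregman_ge_half_norm_sq:
  fixes w N :: "'a::euclidean_space \<Rightarrow> real"
  assumes sc: "strongly_convex_on C N w"
    and d: "(w has_derivative (\<lambda>h. gw x \<bullet> h)) (at x)"
    and x: "x \<in> C" and y: "y \<in> C"
  shows "(N (y - x))\<^sup>2 / 2 \<le> bregman w gw y x"
proof -
  let ?f = "\<lambda>t::real. w (x + t *\<^sub>R (y - x))"
  let ?q = "\<lambda>t::real. w y - w x - (1 - t) / 2 * (N (y - x))\<^sup>2"
  have "((\<lambda>t. x + t *\<^sub>R (y - x)) has_derivative (\<lambda>t. t *\<^sub>R (y - x))) (at 0)"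
    by (auto intro!: derivative_eq_intros)
  moreover have "(w has_derivative (\<lambda>h. gw x \<bullet> h)) (at (x + 0 *\<^sub>R (y - x)))" using d by simp
  ultimately have "(?f has_derivative (\<lambda>t. gw x \<bullet> (t *\<^sub>R (y - x)))) (at 0)"
    by (rule has_derivative_compose)
  then have "(?f has_real_derivative (gw x \<bullet> (y - x))) (at 0)"
    by (simp add: has_field_derivative_def mult.commute[of _ "gw x \<bullet> (y - x)"])
  then have slope: "((\<lambda>t. (?f t - ?f 0) / t) \<longlongrightarrow> gw x \<bullet> (y - x)) (at_right 0)"
    unfolding DERIV_def by (auto intro: tendsto_mono[OF at_le])
  have q: "(?q \<longlongrightarrow> ?q 0) (at_right 0)"
    by (intro tendsto_intros) simp
  have "eventually (\<lambda>t. (?f t - ?f 0) / t \<le> ?q t) (at_right 0)"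
    unfolding eventually_at_right[OF zero_less_one]
  proof (intro exI[of _ 1] conjI allI impI)
    fix t :: real assume t: "0 < t" "t < 1"
    have "x + t *\<^sub>R (y - x) = t *\<^sub>R y + (1 - t) *\<^sub>R x" by (simp add: algebra_simps)
    then have "?f t \<le> t * w y + (1 - t) * w x - t * (1 - t) / 2 * (N (y - x))\<^sup>2"
      using sc x y t unfolding strongly_convex_on_def by auto
    then have "?f t - ?f 0 \<le> t * ?q t" by (simp add: algebra_simps)
    then show "(?f t - ?f 0) / t \<le> ?q t"
      using t by (simp add: divide_le_eq mult.commute)
  qed simp
  then have "gw x \<bullet> (y - x) \<le> ?q 0"
    by (rule tendsto_le[OF trivial_limit_at_right_real q slope])
  then show ?thesis unfolding bregman_def by simp
qed

lemma le_convex_on_if_le_on_rel_interior: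
  fixes f g :: "'a::euclidean_space \<Rightarrow> real"
  assumes X: "convex X" and g: "convex_on X g" and f: "continuous_on X f"
    and le: "\<And>z. z \<in> rel_interior X \<Longrightarrow> f z \<le> g z"
    and y: "y \<in> X"
  shows "f y \<le> g y"
proof -
  obtain c where c: "c \<in> rel_interior X"
    using rel_interior_eq_empty[OF X] y by blast
  then have cX: "c \<in> X" using rel_interior_subset by blast
  define p where "p t = (1 - t) *\<^sub>R y + t *\<^sub>R c" for t :: real
  have "p ` {0..1} \<subseteq> X"
    using convexD_alt[OF X y cX] by (auto simp: p_def algebra_simps)
  then have "continuous_on {0..1} (f \<circ> p)"
    unfolding p_def by (intro continuous_on_compose continuous_intros continuous_on_subset[OF f])
  then have "((f \<circ> p) \<longlongrightarrow> (f \<circ> p) 0) (at_right 0)"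
    by (rule continuous_on_Icc_at_rightD) simp
  then have "((\<lambda>t. f (p t)) \<longlongrightarrow> f y) (at_right 0)"
    by (simp add: p_def comp_def)
  moreover have "((\<lambda>t. (1 - t) * g y + t * g c) \<longlongrightarrow> (1 - 0) * g y + 0 * g c) (at_right 0)"
    by (intro tendsto_intros)
  moreover have "eventually (\<lambda>t. f (p t) \<le> (1 - t) * g y + t * g c) (at_right 0)"
    unfolding eventually_at_right[OF zero_less_one]
  proof (intro exI[of _ 1] conjI allI impI)
    fix t :: real assume t: "0 < t" "t < 1"
    have "p t = y - t *\<^sub>R (y - c)" by (simp add: p_def algebra_simps)
    then have "p t \<in> rel_interior X"
      using rel_interior_closure_convex_shrink[OF X c closure_subset[THEN subsetD, OF y] t(1)] t(2)
      by simp
    then have "f (p t) \<le> g (p t)" by (rule le)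
    also have "\<dots> \<le> (1 - t) * g y + t * g c"
      unfolding p_def using convex_onD[OF g] t y cX by simp
    finally show "f (p t) \<le> (1 - t) * g y + t * g c" .
  qed simp
  ultimately have "f y \<le> (1 - 0) * g y + 0 * g c"
    by (intro tendsto_le[OF trivial_limit_at_right_real])
  then show ?thesis by simp
qed

lemma is_DGF_subset_closure:
  assumes "convex X" and "is_DGF X N S w gw"
  shows "X \<subseteq> closure S"
proof -
  have "X \<subseteq> closure (rel_interior X)"
    using convex_closure_rel_interior[OF assms(1)] closure_subset by blast
  also have "\<dots> \<subseteq> closure S"
    using assms(2) closure_mono unfolding is_DGF_def by blast
  finally show ?thesis .
qed

lemma is_DGF_bregman_ge_half_norm_sq:
  assumes X: "convex X" and dgf: "is_DGF X N S w gw"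
    and x: "x \<in> S" and y: "y \<in> X"
  shows "(N (y - x))\<^sup>2 / 2 \<le> bregman w gw y x"
  using dgf is_DGF_subset_closure[OF X dgf] x y closure_subset
  by (intro bregman_ge_half_norm_sq[where C = "closure S"]) (auto simp: is_DGF_def)

lemma rel_smooth_bound_on_convex_set:
  assumes X: "convex X" and N: "is_norm N" and dgf: "is_DGF X N S w gw"
    and F: "continuous_on X F"
    and smooth: "rel_smooth (X \<inter> S) F gF l w gw"
    and x: "x \<in> X \<inter> S" and y: "y \<in> X"
  shows "\<bar>F y - F x - gF x \<bullet> (y - x)\<bar> \<le> l * bregman w gw y x"
proof -
  have ri: "rel_interior X \<subseteq> X \<inter> S"
    using dgf rel_interior_subset unfolding is_DGF_def by blast
  have D_lower: "\<And>z. z \<in> X \<Longrightarrow> (N (z - x))\<^sup>2 / 2 \<le> bregman w gw z x"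
    using is_DGF_bregman_ge_half_norm_sq[OF X dgf] x by blast
  have on_XS: "\<bar>F z - F x - gF x \<bullet> (z - x)\<bar> \<le> l * bregman w gw z x" if "z \<in> X \<inter> S" for z
  proof -
    have "- l * bregman w gw z x \<le> F z - F x - gF x \<bullet> (z - x)
        \<and> F z - F x - gF x \<bullet> (z - x) \<le> l * bregman w gw z x"
      using smooth that x unfolding rel_smooth_def by blast
    then show ?thesis by (auto simp: abs_le_iff)
  qed
  show ?thesis
  proof (cases "l < 0")
    case True
    have "z = x" if z: "z \<in> X \<inter> S" for z
    proof -
      have "0 \<le> l * bregman w gw z x" using on_XS[OF z] by linarith
      then have "bregman w gw z x \<le> 0" using True by (simp add: zero_le_mult_iff)
      moreover have "(N (z - x))\<^sup>2 / 2 \<le> bregman w gw z x" using D_lower[OF IntD1[OF z]] .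
      ultimately have "(N (z - x))\<^sup>2 \<le> 0" by linarith
      then show "z = x" using N unfolding is_norm_def by simp
    qed
    then have "closure (X \<inter> S) \<subseteq> {x}" using closure_mono[of "X \<inter> S" "{x}"] by auto
    moreover have "X \<subseteq> closure (X \<inter> S)"
      using convex_closure_rel_interior[OF X] closure_mono[OF ri] closure_subset by blast
    ultimately have "y = x" using y by blast
    then show ?thesis by (simp add: bregman_def)
  next
    case False
    have "convex_on (closure S) w"
      using dgf strongly_convex_on_imp_convex_on unfolding is_DGF_def by blast
    then have "convex_on X (\<lambda>z. bregman w gw z x)"
      by (rule convex_on_subset[OF convex_on_bregman is_DGF_subset_closure[OF X dgf] X])
    then have "convex_on X (\<lambda>z. l * bregman w gw z x)"
      using False by (intro convex_on_cmul) auto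
    moreover have "continuous_on X (\<lambda>z. \<bar>F z - F x - gF x \<bullet> (z - x)\<bar>)"
      by (intro continuous_intros F)
    moreover have "\<bar>F z - F x - gF x \<bullet> (z - x)\<bar> \<le> l * bregman w gw z x"
      if "z \<in> rel_interior X" for z
      using on_XS ri that by blast
    ultimately show ?thesis
      by (rule le_convex_on_if_le_on_rel_interior[OF X _ _ _ y])
  qed
qed

theorem lemma8:
  fixes X S :: "'a::euclidean_space set"
    and N w F r :: "'a \<Rightarrow> real" and gw gF :: "'a \<Rightarrow> 'a"
    and l \<rho> :: real and x xp :: 'a
  assumes X: "closed X" "convex X"
    and N: "is_norm N"
    and dgf: "is_DGF X N S w gw"
    and F: "\<And>y. (F has_derivative (\<lambda>h. gF y \<bullet> h)) (at y)"
    and r: "convex_on UNIV r" "lsc r"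
    and smooth: "rel_smooth (X \<inter> S) F gF l w gw"
    and rho: "\<rho> \<ge> 2 * l"
    and x: "x \<in> X \<inter> S"
    and env_min: "\<exists>y\<in>X. \<forall>z\<in>X. F y + r y + \<rho> * bregman w gw y x \<le> F z + r z + \<rho> * bregman w gw z x"
    and xp: "xp \<in> X"
    and xp_min: "\<forall>y\<in>X. gF x \<bullet> xp + r xp + (\<rho> - l) * bregman w gw xp x
                        \<le> gF x \<bullet> y + r y + (\<rho> - l) * bregman w gw y x"
  shows "moreau_env X (\<lambda>y. F y + r y) w gw \<rho> x \<ge> F xp + r xp"
  unfolding moreau_env_def
proof (rule cINF_greatest)
  show "X \<noteq> {}" using xp by blast
next
  fix z assume z: "z \<in> X"
  have "continuous_on X F"
    using F has_derivative_continuous by (blast intro: continuous_at_imp_continuous_on)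
  then have bound: "\<And>y. y \<in> X \<Longrightarrow> \<bar>F y - F x - gF x \<bullet> (y - x)\<bar> \<le> l * bregman w gw y x"
    using rel_smooth_bound_on_convex_set[OF X(2) N dgf _ smooth x] by blast
  have lower: "F x + gF x \<bullet> (z - x) - l * bregman w gw z x \<le> F z"
    using bound[OF z] by (simp add: abs_le_iff)
  have upper: "F xp \<le> F x + gF x \<bullet> (xp - x) + l * bregman w gw xp x"
    using bound[OF xp] by (simp add: abs_le_iff)
  have "(N (xp - x))\<^sup>2 / 2 \<le> bregman w gw xp x"
    using is_DGF_bregman_ge_half_norm_sq[OF X(2) dgf _ xp] x by blast
  then have "0 \<le> bregman w gw xp x"
    by (rule order_trans[rotated]) simp
  then have "2 * l * bregman w gw xp x \<le> \<rho> * bregman w gw xp x"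
    using rho by (rule mult_right_mono[rotated])
  moreover have "gF x \<bullet> xp + r xp + (\<rho> - l) * bregman w gw xp x
      \<le> gF x \<bullet> z + r z + (\<rho> - l) * bregman w gw z x"
    using xp_min z by blast
  ultimately show "F xp + r xp \<le> F z + r z + \<rho> * bregman w gw z x"
    using lower upper unfolding inner_diff_right left_diff_distrib by linarith
qed

end
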